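(* Let $a_0=0$ and let $a_1<a_2<a_3<\cdots$ be the increasing enumeration of $\mathcal{A}=\{m\ge1:\ c_m=1\}$. Let $(b_n)_{n\ge0}$ be defined by $b_0=0$, $b_{2n}=4b_n$, $b_{2n+1}=4b_n+2$. Then for every integer $k\ge 0$ and every $r\in\{-1,0,1,2\}$ with $4k+r\ge 0$, $$a_{4k+r}=4b_k+r.$$
   Context: For $n\in\mathbb{N}$ let $s_2(n)$ be the sum of the binary digits of $n$ and $t_n=s_2(n)\bmod 2$ (the Prouhet–Thue–Morse sequence). Let $F(X)=\sum_{n\ge1}t_nX^n\in\mathbb{F}_2[[X]]$ and let $G(X)=\sum_{n\ge1}c_nX^n\in\mathbb{F}_2[[X]]$ be its compositional inverse, i.e. $F(G(X))=G(F(X))=X$. The $c_n$ are identified with integers in $\{0,1\}$. Note that $b_n$ is the integer whose base-4 expansion is obtained from the binary expansion of $n$ by replacing each digit $1$ by $2$. *)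

theory Defs
  imports "HOL-Computational_Algebra.Formal_Power_Series" "HOL-Library.Z2" "HOL-Library.Infinite_Set"
begin

fun s2 :: "nat \<Rightarrow> nat" where
  "s2 n = (if n = 0 then 0 else n mod 2 + s2 (n div 2))"

definition tm :: "nat \<Rightarrow> bit" where
  "tm n = of_nat (s2 n mod 2)"

definition TM_F :: "bit fps" where
  "TM_F = Abs_fps (\<lambda>n. if n = 0 then 0 else tm n)"

definition TM_G :: "bit fps" where
  "TM_G = fps_inv TM_F"

definition cc :: "nat \<Rightarrow> nat" where
  "cc n = (if fps_nth TM_G n = 1 then 1 else 0)"

definition AA :: "nat set" where
  "AA = {m. m \<ge> 1 \<and> cc m = 1}"

definition aa :: "nat \<Rightarrow> nat" where
  "aa n = (if n = 0 then 0 else enumerate AA (n - 1))"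

fun bb :: "nat \<Rightarrow> nat" where
  "bb n = (if n = 0 then 0 else 4 * bb (n div 2) + 2 * (n mod 2))"

end

theory Submission
  imports Defs
begin

text \<open>
  Over \<open>F\<^sub>2\<close> squaring is the substitution \<open>X \<mapsto> X\<^sup>2\<close>, so the recursions
  \<open>t\<^sub>2\<^sub>n = t\<^sub>n\<close>, \<open>t\<^sub>2\<^sub>n\<^sub>+\<^sub>1 = 1 + t\<^sub>n\<close> make \<open>F\<close> a root of the quadratic
  \<open>(1+X)\<^sup>2 Y = (1+X)\<^sup>3 Y\<^sup>2 + X\<close>. Likewise the series \<open>B = \<Sum>\<^sub>k X\<^bsup>b\<^sub>k\<^esup>\<close> satisfies
  \<open>B = (1+X\<^sup>2) B(X\<^sup>4) = (1+X)\<^sup>2 B\<^sup>4\<close>, i.e. \<open>(1+X)\<^sup>2 B\<^sup>3 = 1\<close>. For the series \<open>G\<close> with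
  \<open>X (1+G) = (1+X) B - 1\<close> this cubic relation says exactly that \<open>Y = X\<close> solves the quadratic
  with \<open>X\<close> replaced by \<open>G\<close>; so does \<open>Y = F(G)\<close>, and the quadratic has only one root without
  constant term, hence \<open>F(G) = X\<close> and \<open>G\<close> is the inverse of \<open>F\<close>. The coefficients of \<open>(1+X) B\<close>
  are those of \<open>(1+X+X\<^sup>2+X\<^sup>3) B(X\<^sup>4)\<close>, so \<open>c\<^sub>m = 1\<close> iff \<open>m \<ge> 1\<close> and
  \<open>\<lfloor>(m+1)/4\<rfloor>\<close> is some \<open>b\<^sub>k\<close>: the set \<open>{0} \<union> \<A>\<close> is the union of the blocks
  \<open>{4b\<^sub>k - 1, \<dots>, 4b\<^sub>k + 2}\<close>, which follow each other in order because \<open>b\<close> is increasing.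
\<close>

unbundle fps_syntax

text \<open>The defining equations of \<^const>\<open>s2\<close> and \<^const>\<open>bb\<close> loop under the simplifier.\<close>
declare s2.simps [simp del] bb.simps [simp del]

lemma fps_compose_X_power_nth:
  fixes f :: "'a::comm_ring_1 fps"
  assumes "0 < d"
  shows "(f oo fps_X ^ d) $ n = (if d dvd n then f $ (n div d) else 0)"
proof -
  have "(f oo fps_X ^ d) $ n = (\<Sum>i\<in>{0..n}. if i = n div d \<and> d dvd n then f $ i else 0)"
    unfolding fps_compose_nth power_mult[symmetric] fps_X_power_nth
    by (intro sum.cong) (use assms in auto)
  also have "\<dots> = (if d dvd n then f $ (n div d) else 0)"
    by (simp add: sum.delta' div_le_dividend)
  finally show ?thesis .
qed

lemma sum_X_power_mult_compose_X_power:
  fixes f :: "'a::comm_ring_1 fps"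
  assumes "R \<subseteq> {..<d}"
  shows "(\<Sum>j\<in>R. fps_X ^ j) * (f oo fps_X ^ d)
    = Abs_fps (\<lambda>n. if n mod d \<in> R then f $ (n div d) else 0)"
proof (rule fps_ext)
  fix n
  have R: "finite R" using assms finite_subset by blast
  have digit: "j \<le> n \<and> d dvd n - j \<longleftrightarrow> j = n mod d" if "j \<in> R" for j
    using that assms mod_eq_dvd_iff_nat[of j n d] mod_less_eq_dividend[of n d]
    by (metis lessThan_iff mod_less subsetD)
  have "((\<Sum>j\<in>R. fps_X ^ j) * (f oo fps_X ^ d)) $ n
      = (\<Sum>j\<in>R. if j = n mod d then f $ (n div d) else 0)"
  proof (unfold sum_distrib_right fps_sum_nth, intro sum.cong refl)
    fix j assume "j \<in> R"
    then have "0 < d" using assms by auto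
    then show "(fps_X ^ j * (f oo fps_X ^ d)) $ n = (if j = n mod d then f $ (n div d) else 0)"
      using digit[OF \<open>j \<in> R\<close>]
      by (auto simp: fps_X_power_mult_nth fps_compose_X_power_nth minus_mod_eq_mult_div)
  qed
  also have "\<dots> = Abs_fps (\<lambda>n. if n mod d \<in> R then f $ (n div d) else 0) $ n"
    using R by (simp add: sum.delta')
  finally show "((\<Sum>j\<in>R. fps_X ^ j) * (f oo fps_X ^ d)) $ n = \<dots>" .
qed

lemma sum_symmetric_char_2:
  fixes h :: "nat \<Rightarrow> 'a::comm_ring_1"
  assumes two: "(2::'a) = 0" and sym: "\<And>i. i \<le> n \<Longrightarrow> h (n - i) = h i"
  shows "(\<Sum>i=0..n. h i) = (if even n then h (n div 2) else 0)"
proof -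
  define L where "L = {i. 2 * i < n}"
  define M where "M = (if even n then {n div 2} else {})"
  have L: "finite L" "inj_on (\<lambda>i. n - i) L"
    by (auto simp: L_def inj_on_def intro: finite_subset[of _ "{..<n}"])
  have split: "{0..n} = (L \<union> M) \<union> (\<lambda>i. n - i) ` L"
    by (auto simp: L_def M_def image_iff elim!: evenE) presburger+
  have "(\<Sum>i=0..n. h i) = sum h L + sum h M + sum h ((\<lambda>i. n - i) ` L)"
    unfolding split using L by (subst sum.union_disjoint; auto simp: L_def M_def)+
  also have "sum h ((\<lambda>i. n - i) ` L) = sum h L"
    using L sym by (simp add: sum.reindex L_def)
  also have "sum h L + sum h M + sum h L = 2 * sum h L + sum h M"
    by (simp add: algebra_simps mult_2)
  finally show ?thesis using two by (simp add: M_def)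
qed

lemma fps_square_char_2:
  fixes f :: "'a::comm_ring_1 fps"
  assumes "(2::'a) = 0"
  shows "f ^ 2 = Abs_fps (\<lambda>n. (f $ n) ^ 2) oo fps_X ^ 2"
proof (rule fps_ext)
  fix n
  have "(f ^ 2) $ n = (\<Sum>i=0..n. f $ i * f $ (n - i))"
    by (simp add: power2_eq_square fps_mult_nth)
  also have "\<dots> = (if even n then f $ (n div 2) * f $ (n - n div 2) else 0)"
    by (rule sum_symmetric_char_2) (use assms in \<open>simp_all add: mult.commute\<close>)
  also have "\<dots> = (if even n then (f $ (n div 2)) ^ 2 else 0)"
    by (auto simp: power2_eq_square elim!: evenE)
  also have "\<dots> = (Abs_fps (\<lambda>n. (f $ n) ^ 2) oo fps_X ^ 2) $ n"
    by (simp add: fps_compose_X_power_nth[where d = 2])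
  finally show "(f ^ 2) $ n = \<dots>" .
qed

lemma fps_quadratic_root_unique:
  fixes a b c y z :: "'a::idom fps"
  assumes "a * y = b * y ^ 2 + c" and "a * z = b * z ^ 2 + c"
    and "y $ 0 = 0" and "z $ 0 = 0" and "a $ 0 \<noteq> 0"
  shows "y = z"
proof -
  have "(y - z) * (a - b * (y + z)) = (a * y - b * y ^ 2 - c) - (a * z - b * z ^ 2 - c)"
    by algebra
  then have "(y - z) * (a - b * (y + z)) = 0"
    using assms(1,2) by simp
  moreover have "a - b * (y + z) \<noteq> 0"
  proof
    assume "a - b * (y + z) = 0"
    then have "(a - b * (y + z)) $ 0 = 0" by simp
    then show False using assms(3-5) by simp
  qed
  ultimately show "y = z" by simp
qed

lemma fps_inv_eqI:
  fixes f g :: "'a::field fps"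
  assumes "f $ 0 = 0" and "f $ 1 \<noteq> 0" and "g $ 0 = 0" and "f oo g = fps_X"
  shows "fps_inv f = g"
proof -
  have "fps_inv f = fps_inv f oo (f oo g)"
    using assms(4) by simp
  also have "\<dots> = (fps_inv f oo f) oo g"
    using assms(1,3) by (simp add: fps_compose_assoc)
  finally show ?thesis
    using assms(1-3) by (simp add: fps_inv)
qed

lemma enumerate_range_strict_mono:
  fixes f :: "nat \<Rightarrow> nat"
  assumes "strict_mono f"
  shows "enumerate (range f) = f"
proof
  have inf: "infinite (range f)"
    using assms by (simp add: range_inj_infinite strict_mono_imp_inj_on)
  fix n
  show "enumerate (range f) n = f n"
  proof (induction n)
    case 0
    show ?case
      unfolding enumerate_0
      by (rule Least_equality) (auto simp: strict_mono_less_eq[OF assms])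
  next
    case (Suc n)
    show ?case
      unfolding enumerate_Suc''[OF inf] Suc.IH
      by (rule Least_equality) (auto simp: strict_mono_less_eq[OF assms] strict_mono_less[OF assms])
  qed
qed

lemma Suc_nat_four_mul_add:
  fixes r :: int
  assumes "r \<in> {-1, 0, 1, 2}" and "0 \<le> 4 * int k + r"
  obtains s :: nat where "s < 4" and "r = int s - 1" and "Suc (nat (4 * int k + r)) = 4 * k + s"
proof (rule that[of "nat (r + 1)"])
  show "nat (r + 1) < 4" and "r = int (nat (r + 1)) - 1"
    using assms(1) by auto
  show "Suc (nat (4 * int k + r)) = 4 * k + nat (r + 1)"
    using assms by auto
qed

lemma two_bit_fps: "(2 :: bit fps) = 0"
  by (simp add: fps_eq_iff fps_numeral_nth)

lemma bit_fps_square_one_plus: "(1 + f :: bit fps) ^ 2 = 1 + f ^ 2"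
proof -
  have "(1 + f) ^ 2 = 1 + 2 * f + f ^ 2" by algebra
  then show ?thesis by (simp add: two_bit_fps)
qed

lemma bit_fps_square: "(f :: bit fps) ^ 2 = f oo fps_X ^ 2"
proof -
  have "Abs_fps (\<lambda>n. (f $ n) ^ 2) = f"
    by (rule fps_ext) (simp add: of_bool_odd_eq_mod_2)
  then show ?thesis using fps_square_char_2[of f] by simp
qed

lemma bit_fps_power_4: "(f :: bit fps) ^ 4 = f oo fps_X ^ 4"
proof -
  have "f ^ 4 = (f ^ 2) ^ 2"
    by (simp flip: power_mult)
  also have "\<dots> = (f oo fps_X ^ 2) oo fps_X ^ 2"
    by (simp only: bit_fps_square[of f] bit_fps_square[of "f oo fps_X ^ 2"])
  also have "\<dots> = f oo (fps_X ^ 2 oo fps_X ^ 2)"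
    by (simp add: fps_compose_assoc)
  also have "fps_X ^ 2 oo fps_X ^ 2 = (fps_X ^ 4 :: bit fps)"
    by (simp add: fps_X_power_compose flip: power_mult)
  finally show ?thesis .
qed

lemma s2_double: "s2 (2 * n) = s2 n"
  by (subst s2.simps) (simp add: s2.simps[of 0])

lemma s2_Suc_double: "s2 (Suc (2 * n)) = Suc (s2 n)"
  by (subst s2.simps) simp

lemma tm_0: "tm 0 = 0"
  by (simp add: tm_def s2.simps)

lemma tm_double: "tm (2 * n) = tm n"
  by (simp add: tm_def s2_double)

lemma tm_Suc_double: "tm (Suc (2 * n)) = 1 + tm n"
  by (cases "even (s2 n)") (simp_all add: tm_def s2_Suc_double mod_Suc)

lemma TM_F_even_odd_split:
  "TM_F = (1 + fps_X) * (TM_F oo fps_X ^ 2) + Abs_fps (\<lambda>n. of_bool (odd n))"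
proof (rule fps_ext)
  fix n
  show "TM_F $ n = ((1 + fps_X) * (TM_F oo fps_X ^ 2) + Abs_fps (\<lambda>n. of_bool (odd n))) $ n"
  proof (cases "even n")
    case True
    then obtain m where "n = 2 * m" by (elim evenE)
    then show ?thesis
      by (cases "m = 0") (simp_all add: TM_F_def distrib_right fps_compose_X_power_nth[where d = 2] tm_double)
  next
    case False
    then obtain m where "n = Suc (2 * m)" by (elim oddE) simp
    then show ?thesis
      by (simp add: TM_F_def distrib_right fps_compose_X_power_nth[where d = 2] tm_Suc_double tm_0)
  qed
qed

lemma one_plus_X_square_mult_odd_indicator:
  "(1 + fps_X ^ 2) * Abs_fps (\<lambda>n. of_bool (odd n)) = (fps_X :: bit fps)"
proof (rule fps_ext)
  fix n
  show "((1 + fps_X ^ 2) * Abs_fps (\<lambda>n. of_bool (odd n))) $ n = (fps_X :: bit fps) $ n"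
    by (cases "n < 2") (auto simp: distrib_right fps_X_power_mult_nth even_diff_nat less_2_cases_iff)
qed

lemma TM_F_functional_eq: "(1 + fps_X) ^ 2 * TM_F = (1 + fps_X) ^ 3 * TM_F ^ 2 + fps_X"
proof -
  define E where "E = TM_F oo fps_X ^ 2"
  define Q :: "bit fps" where "Q = Abs_fps (\<lambda>n. of_bool (odd n))"
  have "TM_F = (1 + fps_X) * E + Q"
    unfolding E_def Q_def by (rule TM_F_even_odd_split)
  then have "(1 + fps_X) ^ 2 * TM_F = (1 + fps_X) ^ 3 * E + (1 + fps_X) ^ 2 * Q"
    by algebra
  then show ?thesis
    by (simp only: E_def Q_def bit_fps_square[symmetric] bit_fps_square_one_plus one_plus_X_square_mult_odd_indicator)
qed

lemma bb_0: "bb 0 = 0"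
  by (simp add: bb.simps)

lemma zero_in_range_bb: "0 \<in> range bb"
  by (metis bb_0 rangeI)

lemma bb_rec: "bb k = 4 * bb (k div 2) + 2 * (k mod 2)"
  by (cases "k = 0") (simp_all add: bb.simps[of k] bb_0)

lemma bb_double: "bb (2 * n) = 4 * bb n"
  using bb_rec[of "2 * n"] by simp

lemma bb_Suc_double: "bb (Suc (2 * n)) = 4 * bb n + 2"
  using bb_rec[of "Suc (2 * n)"] by simp

lemma strict_mono_bb: "strict_mono bb"
proof (rule strict_mono_Suc_iff[THEN iffD2], rule allI)
  show "bb n < bb (Suc n)" for n
  proof (induction n rule: nat_bit_induct)
    case zero
    show ?case using bb_Suc_double[of 0] by (simp add: bb_0)
  next
    case (even n)
    show ?case by (simp add: bb_double bb_Suc_double)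
  next
    case (odd n)
    have "Suc (Suc (2 * n)) = 2 * Suc n" by simp
    then show ?case using odd.IH by (simp only: bb_double bb_Suc_double)
  qed
qed

lemma in_range_bb_iff:
  "m \<in> range bb \<longleftrightarrow> (m mod 4 = 0 \<or> m mod 4 = 2) \<and> m div 4 \<in> range bb"
proof
  assume "m \<in> range bb"
  then obtain k where "m = bb k" by blast
  then have "m = 4 * bb (k div 2) + 2 * (k mod 2)"
    using bb_rec[of k] by simp
  then have "m mod 4 = 2 * (k mod 2)" and "m div 4 = bb (k div 2)"
    by simp_all
  then show "(m mod 4 = 0 \<or> m mod 4 = 2) \<and> m div 4 \<in> range bb"
    by auto
next
  assume "(m mod 4 = 0 \<or> m mod 4 = 2) \<and> m div 4 \<in> range bb"
  then obtain k where "m div 4 = bb k" and "m mod 4 = 0 \<or> m mod 4 = 2" by auto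
  then have "m = bb (2 * k) \<or> m = bb (Suc (2 * k))"
    unfolding bb_double bb_Suc_double using div_mult_mod_eq[of m 4] by linarith
  then show "m \<in> range bb" by blast
qed

definition bb_range_fps :: "bit fps" where
  "bb_range_fps = Abs_fps (\<lambda>n. of_bool (n \<in> range bb))"

lemma bb_range_fps_functional_eq: "bb_range_fps = (1 + fps_X ^ 2) * bb_range_fps ^ 4"
proof -
  have "(\<Sum>j\<in>{0, 2}. fps_X ^ j) * (bb_range_fps oo fps_X ^ 4)
      = Abs_fps (\<lambda>n. if n mod 4 \<in> {0, 2} then bb_range_fps $ (n div 4) else 0)"
    by (rule sum_X_power_mult_compose_X_power) auto
  also have "\<dots> = bb_range_fps"
  proof (rule fps_ext)
    fix n
    show "Abs_fps (\<lambda>n. if n mod 4 \<in> {0, 2} then bb_range_fps $ (n div 4) else 0) $ n = bb_range_fps $ n"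
      using in_range_bb_iff[of n] by (auto simp: bb_range_fps_def)
  qed
  finally show ?thesis
    by (simp add: bit_fps_power_4[of bb_range_fps])
qed

lemma one_plus_X_mult_bb_range_fps:
  "(1 + fps_X) * bb_range_fps = Abs_fps (\<lambda>n. of_bool (n div 4 \<in> range bb))"
proof -
  have "(\<Sum>j<4. fps_X ^ j) * (bb_range_fps oo fps_X ^ 4) = Abs_fps (\<lambda>n. of_bool (n div 4 \<in> range bb))"
    by (subst sum_X_power_mult_compose_X_power) (auto simp: bb_range_fps_def)
  moreover have "(\<Sum>j<4. fps_X ^ j) = (1 + fps_X) * (1 + fps_X ^ 2 :: bit fps)"
    by (simp add: numeral_eq_Suc algebra_simps)
  ultimately show ?thesis
    using bb_range_fps_functional_eq by (simp add: bit_fps_power_4[of bb_range_fps] mult.assoc)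
qed

lemma bb_range_fps_cube: "(1 + fps_X) ^ 2 * bb_range_fps ^ 3 = 1"
proof -
  have "bb_range_fps * ((1 + fps_X) ^ 2 * bb_range_fps ^ 3 - 1) = (1 + fps_X ^ 2) * bb_range_fps ^ 4 - bb_range_fps"
    by (simp only: bit_fps_square_one_plus[symmetric]) algebra
  also have "\<dots> = 0"
    by (simp flip: bb_range_fps_functional_eq)
  finally show ?thesis
    using fps_nonzeroI[of bb_range_fps 0] by (simp add: bb_range_fps_def zero_in_range_bb)
qed

definition TM_G_closed_form :: "bit fps" where
  "TM_G_closed_form = Abs_fps (\<lambda>n. of_bool (1 \<le> n \<and> Suc n div 4 \<in> range bb))"

lemma X_mult_one_plus_TM_G_closed_form:
  "fps_X * (1 + TM_G_closed_form) = (1 + fps_X) * bb_range_fps - 1"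
proof (rule fps_ext)
  fix n
  show "(fps_X * (1 + TM_G_closed_form)) $ n = ((1 + fps_X) * bb_range_fps - 1) $ n"
    unfolding one_plus_X_mult_bb_range_fps
    by (cases n) (auto simp: TM_G_closed_form_def zero_in_range_bb)
qed

lemma X_solves_composed_TM_F_equation:
  "(1 + TM_G_closed_form) ^ 2 * fps_X = (1 + TM_G_closed_form) ^ 3 * fps_X ^ 2 + TM_G_closed_form"
proof -
  define V where "V = fps_X * (1 + TM_G_closed_form)"
  \<comment> \<open>Multiplied by \<open>X\<close>, the claim reads \<open>V\<^sup>2 = V\<^sup>3 + V - X\<close>, which differs from
    \<open>(1 + V)\<^sup>3 = 1 + X\<close> by a multiple of 2.\<close>
  have "(1 + V) ^ 3 = (1 + fps_X) * ((1 + fps_X) ^ 2 * bb_range_fps ^ 3)"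
    unfolding V_def X_mult_one_plus_TM_G_closed_form by algebra
  then have cube: "(1 + V) ^ 3 = 1 + fps_X"
    by (simp add: bb_range_fps_cube)
  have "fps_X * ((1 + TM_G_closed_form) ^ 3 * fps_X ^ 2 + TM_G_closed_form - (1 + TM_G_closed_form) ^ 2 * fps_X)
      = ((1 + V) ^ 3 - (1 + fps_X)) - 2 * (V + 2 * V ^ 2)"
    unfolding V_def by algebra
  also have "\<dots> = 0"
    by (simp add: cube two_bit_fps)
  finally show ?thesis
    by simp
qed

lemma TM_F_compose_closed_form: "TM_F oo TM_G_closed_form = fps_X"
proof (rule fps_quadratic_root_unique)
  have G0: "TM_G_closed_form $ 0 = 0"
    by (simp add: TM_G_closed_form_def)
  have "(1 + fps_X) oo TM_G_closed_form = 1 + TM_G_closed_form"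
    using G0 by (simp add: fps_compose_add_distrib)
  then show "(1 + TM_G_closed_form) ^ 2 * (TM_F oo TM_G_closed_form)
      = (1 + TM_G_closed_form) ^ 3 * (TM_F oo TM_G_closed_form) ^ 2 + TM_G_closed_form"
    using arg_cong[OF TM_F_functional_eq, of "\<lambda>f. f oo TM_G_closed_form"] G0
    by (simp add: fps_compose_mult_distrib fps_compose_add_distrib fps_compose_power[symmetric])
  show "(1 + TM_G_closed_form) ^ 2 * fps_X = (1 + TM_G_closed_form) ^ 3 * fps_X ^ 2 + TM_G_closed_form"
    by (rule X_solves_composed_TM_F_equation)
  show "(TM_F oo TM_G_closed_form) $ 0 = 0" "fps_X $ 0 = (0 :: bit)"
    by (simp_all add: TM_F_def)
  show "((1 + TM_G_closed_form) ^ 2) $ 0 \<noteq> 0"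
    using G0 by (simp add: power2_eq_square)
qed

lemma TM_G_eq_closed_form: "TM_G = TM_G_closed_form"
  unfolding TM_G_def
proof (rule fps_inv_eqI)
  show "TM_F $ 0 = 0" "TM_F $ 1 \<noteq> 0"
    using tm_Suc_double[of 0] by (simp_all add: TM_F_def tm_0)
  show "TM_G_closed_form $ 0 = 0"
    by (simp add: TM_G_closed_form_def)
qed (rule TM_F_compose_closed_form)

lemma AA_eq: "AA = {m. 1 \<le> m \<and> Suc m div 4 \<in> range bb}"
  by (auto simp: AA_def cc_def TM_G_eq_closed_form TM_G_closed_form_def)

definition aa_closed_form :: "nat \<Rightarrow> nat" where
  "aa_closed_form n = 4 * bb (Suc n div 4) + Suc n mod 4 - 1"

lemma aa_closed_form_0: "aa_closed_form 0 = 0"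
  by (simp add: aa_closed_form_def bb_0)

lemma Suc_aa_closed_form: "Suc (aa_closed_form n) = 4 * bb (Suc n div 4) + Suc n mod 4"
proof -
  have "0 < 4 * bb (Suc n div 4) + Suc n mod 4"
  proof (cases "Suc n mod 4 = 0")
    case True
    then have "0 < Suc n div 4" by presburger
    then have "bb 0 < bb (Suc n div 4)" by (rule strict_monoD[OF strict_mono_bb])
    then show ?thesis by (simp add: bb_0)
  qed simp
  then show ?thesis by (simp add: aa_closed_form_def)
qed

lemma strict_mono_aa_closed_form: "strict_mono aa_closed_form"
proof (rule strict_mono_Suc_iff[THEN iffD2], rule allI)
  fix n
  define q where "q = Suc n div 4"
  have "4 * bb q + Suc n mod 4 < 4 * bb (Suc (Suc n) div 4) + Suc (Suc n) mod 4"
  proof (cases "Suc (Suc n mod 4) = 4")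
    case True
    have "bb q < bb (Suc q)" using strict_mono_bb by (simp add: strict_mono_less)
    then show ?thesis using True by (simp add: q_def div_Suc mod_Suc[of "Suc n"])
  qed (simp add: q_def div_Suc mod_Suc[of "Suc n"])
  then have "Suc (aa_closed_form n) < Suc (aa_closed_form (Suc n))"
    unfolding Suc_aa_closed_form q_def .
  then show "aa_closed_form n < aa_closed_form (Suc n)" by simp
qed

lemma in_range_aa_closed_form_iff: "m \<in> range aa_closed_form \<longleftrightarrow> Suc m div 4 \<in> range bb"
proof
  assume "m \<in> range aa_closed_form"
  then obtain n where "Suc m = 4 * bb (Suc n div 4) + Suc n mod 4"
    by (metis Suc_aa_closed_form imageE)
  then have "Suc m div 4 = bb (Suc n div 4)" by simp
  then show "Suc m div 4 \<in> range bb" by simp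
next
  assume "Suc m div 4 \<in> range bb"
  then obtain q where "Suc m div 4 = bb q" by auto
  define r where "r = Suc m mod 4"
  have Suc_m: "Suc m = 4 * bb q + r" and "r < 4"
    using \<open>Suc m div 4 = bb q\<close> div_mult_mod_eq[of "Suc m" 4] by (simp_all add: r_def)
  have "4 * q + r \<noteq> 0"
  proof
    assume "4 * q + r = 0"
    then show False using Suc_m by (simp add: bb_0)
  qed
  then obtain n where "Suc n = 4 * q + r"
    using not0_implies_Suc by metis
  then have "Suc (aa_closed_form n) = Suc m"
    unfolding Suc_aa_closed_form Suc_m using \<open>r < 4\<close> by simp
  then show "m \<in> range aa_closed_form"
    by (metis Suc_inject rangeI)
qed

lemma AA_eq_range_aa_closed_form: "AA = range (\<lambda>j. aa_closed_form (Suc j))"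
proof (intro set_eqI iffI)
  fix m assume "m \<in> AA"
  then have "1 \<le> m" and "m \<in> range aa_closed_form"
    by (auto simp: AA_eq in_range_aa_closed_form_iff)
  then obtain n where "m = aa_closed_form n" by blast
  moreover have "n \<noteq> 0" using calculation \<open>1 \<le> m\<close> aa_closed_form_0 by (cases n) simp_all
  ultimately show "m \<in> range (\<lambda>j. aa_closed_form (Suc j))"
    by (metis not0_implies_Suc rangeI)
next
  fix m assume "m \<in> range (\<lambda>j. aa_closed_form (Suc j))"
  then obtain j where m: "m = aa_closed_form (Suc j)" by blast
  then have "1 \<le> m"
    using strict_mono_aa_closed_form[THEN strict_monoD, of 0 "Suc j"] aa_closed_form_0 by simp
  then show "m \<in> AA"
    using m in_range_aa_closed_form_iff by (auto simp: AA_eq)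
qed

lemma aa_eq_closed_form: "aa n = aa_closed_form n"
proof -
  have "strict_mono (\<lambda>j. aa_closed_form (Suc j))"
    using strict_mono_aa_closed_form by (simp add: strict_mono_def)
  then have "enumerate AA = (\<lambda>j. aa_closed_form (Suc j))"
    unfolding AA_eq_range_aa_closed_form by (rule enumerate_range_strict_mono)
  then show ?thesis
    using aa_closed_form_0 by (cases n) (simp_all add: aa_def)
qed

theorem mainTheorem5:
  fixes k :: nat and r :: int
  assumes "r \<in> {-1, 0, 1, 2}" and "4 * int k + r \<ge> 0"
  shows "int (aa (nat (4 * int k + r))) = 4 * int (bb k) + r"
proof -
  obtain s where "s < 4" and r: "r = int s - 1" and "Suc (nat (4 * int k + r)) = 4 * k + s"
    using assms by (rule Suc_nat_four_mul_add)
  then have "Suc (aa (nat (4 * int k + r))) = 4 * bb k + s"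
    by (simp add: aa_eq_closed_form Suc_aa_closed_form)
  then show ?thesis
    unfolding r by linarith
qed

end
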